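(* For every $q\ge2$ and integers $n>h\ge1$, $$M_q(n,h)\ge\frac{\binom{n+q-1}{q-1}}{\phi(h,q)},\qquad M_q(n,h)\le\frac{\binom{n+q-1}{q-1}}{\beta(h,q)}+\sum_{j=1}^{q\lceil h/2\rceil}\binom{n+q-1-j}{q-2}.$$
   Context: $\triangle_n^{q-1}=\{\mathbf x\in\mathbb Z^q:x_i\ge0,\sum_ix_i=n\}$ (multisets of size $n$ over $\{0,\dots,q-1\}$), with $d_1(\mathbf x,\mathbf y)=\frac12\sum_i|x_i-y_i|$. $M_q(n,h)$ is the largest cardinality of a subset of $\triangle_n^{q-1}$ in which distinct elements are at $d_1$-distance $>h$ (equivalently, of a multiset code correcting $h$ deletions). $\beta(h,q)=\sum_{j\ge0}\binom{q-1}{j}\binom{\lceil h/2\rceil}{j}\binom{\lfloor h/2\rfloor+q-1-j}{q-1-j}$. $\phi(h,q)$ is the smallest order of a finite Abelian group containing a $B_h$ set of cardinality $q$, where a set $\{b_0,\dots,b_{q-1}\}$ in an Abelian group is a $B_h$ set if the sums $b_{i_1}+\dots+b_{i_h}$, $0\le i_1\le\dots\le i_h\le q-1$, are pairwise different. Convention: $\binom ab=0$ for integers $a<b$. *)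

theory Defs
  imports "HOL-Algebra.Algebra"
begin

text \<open>The discrete simplex: multisets of size n over {0,...,q-1}, represented as
  count vectors x with x i = 0 for i >= q and sum of x i over i < q equal to n.\<close>
definition simplex :: "nat \<Rightarrow> nat \<Rightarrow> (nat \<Rightarrow> nat) set" where
  "simplex q n = {x. (\<forall>i\<ge>q. x i = 0) \<and> (\<Sum>i<q. x i) = n}"

definition d1 :: "nat \<Rightarrow> (nat \<Rightarrow> nat) \<Rightarrow> (nat \<Rightarrow> nat) \<Rightarrow> real" where
  "d1 q x y = (\<Sum>i<q. \<bar>real (x i) - real (y i)\<bar>) / 2"

definition M :: "nat \<Rightarrow> nat \<Rightarrow> nat \<Rightarrow> nat" where
  "M q n h = Max {card C | C. C \<subseteq> simplex q n \<and>
      (\<forall>x\<in>C. \<forall>y\<in>C. x \<noteq> y \<longrightarrow> d1 q x y > real h)}"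

definition ibinom :: "int \<Rightarrow> nat \<Rightarrow> nat" where
  "ibinom a b = (if a < int b then 0 else nat a choose b)"

definition beta :: "nat \<Rightarrow> nat \<Rightarrow> nat" where
  "beta h q = (\<Sum>j\<le>q - 1. ((q - 1) choose j) * (((h + 1) div 2) choose j)
                 * ((h div 2 + (q - 1 - j)) choose (q - 1 - j)))"

text \<open>b_0,...,b_{q-1} is a B_h set of cardinality q in the abelian group G:
  distinct elements of the carrier such that sums of h of them (with repetition,
  i.e. indexed by multisets of size h over {0..q-1}) are pairwise different.
  The group is written multiplicatively, as in HOL-Algebra.\<close>
definition Bh_set :: "('a, 'b) monoid_scheme \<Rightarrow> nat \<Rightarrow> nat \<Rightarrow> (nat \<Rightarrow> 'a) \<Rightarrow> bool" where
  "Bh_set G h q b \<longleftrightarrow> (\<forall>i<q. b i \<in> carrier G) \<and> inj_on b {..<q} \<and>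
     inj_on (\<lambda>x. finprod G (\<lambda>i. b i [^]\<^bsub>G\<^esub> x i) {..<q}) (simplex q h)"

text \<open>Every finite group is isomorphic to one whose carrier consists of natural numbers,
  so quantifying over groups with carrier type nat loses no generality.\<close>
definition phi :: "nat \<Rightarrow> nat \<Rightarrow> nat" where
  "phi h q = (LEAST m. \<exists>(G::nat monoid) b. comm_group G \<and> finite (carrier G) \<and>
      card (carrier G) = m \<and> Bh_set G h q b)"

end

theory Submission
  imports Defs
begin

text \<open>
  Lower bound: if \<open>b\<close> is a \<open>B\<^sub>h\<close> set in \<open>G\<close>, two distinct points \<open>x \<noteq> y\<close> of the simplex of
  size \<open>n\<close> with the same weight \<open>\<Prod> b\<^sub>i\<^sup>x\<^sup>\<^sub>i\<close> are at distance \<open>> h\<close>: cancelling the common part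
  \<open>min x y\<close> and padding both remainders on one coordinate up to size \<open>h\<close> would give a
  \<open>B\<^sub>h\<close> collision. Hence every fibre of the weight map is a code, and some fibre contains
  at least a \<open>1/|G|\<close> fraction of the simplex.

  Upper bound: around a codeword \<open>x\<close> all of whose coordinates are at least \<open>r = \<lceil>h/2\<rceil>\<close>,
  move at most \<open>r\<close> units off and at most \<open>s = \<lfloor>h/2\<rfloor>\<close> units onto the coordinates
  \<open>1, \<dots>, q-1\<close>, compensating on coordinate \<open>0\<close>. This gives \<open>\<beta>(h,q)\<close> points of the simplex of
  size \<open>n + s - r\<close>, and the sets obtained from two codewords are disjoint since their
  distance exceeds \<open>r + s = h\<close>. The codewords with a coordinate below \<open>r\<close> are counted
  by the size of this boundary, which is the correction sum.
\<close>

section \<open>Counting lattice points\<close>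

definition bounded_vectors :: "nat set \<Rightarrow> nat \<Rightarrow> (nat \<Rightarrow> nat) set" where
  "bounded_vectors J m = {f. (\<forall>i. i \<notin> J \<longrightarrow> f i = 0) \<and> sum f J \<le> m}"

definition positive_bounded_vectors :: "nat set \<Rightarrow> nat \<Rightarrow> (nat \<Rightarrow> nat) set" where
  "positive_bounded_vectors J m =
     {f. (\<forall>i. i \<notin> J \<longrightarrow> f i = 0) \<and> (\<forall>i\<in>J. f i > 0) \<and> sum f J \<le> m}"

lemma bounded_vectors_insert:
  assumes "a \<notin> J" "finite J"
  shows "bounded_vectors (insert a J) m
           = (\<lambda>(c, g). g(a := c)) ` (SIGMA c:{..m}. bounded_vectors J (m - c))"
proof (intro Set.set_eqI iffI)
  fix f assume f: "f \<in> bounded_vectors (insert a J) m"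
  have "sum (f(a := 0)) J = sum f J" using assms by (intro sum.cong) auto
  then have "(f a, f(a := 0)) \<in> (SIGMA c:{..m}. bounded_vectors J (m - c))"
    using f assms by (auto simp: bounded_vectors_def)
  moreover have "f = (\<lambda>(c, g). g(a := c)) (f a, f(a := 0))" by auto
  ultimately show "f \<in> (\<lambda>(c, g). g(a := c)) ` (SIGMA c:{..m}. bounded_vectors J (m - c))"
    by blast
next
  fix f assume "f \<in> (\<lambda>(c, g). g(a := c)) ` (SIGMA c:{..m}. bounded_vectors J (m - c))"
  then obtain c g where f: "f = g(a := c)" "c \<le> m" "g \<in> bounded_vectors J (m - c)" by auto
  have "sum f J = sum g J" using assms f by (intro sum.cong) auto
  then show "f \<in> bounded_vectors (insert a J) m" using f assms by (auto simp: bounded_vectors_def)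
qed

lemma card_bounded_vectors:
  "finite J \<Longrightarrow> card (bounded_vectors J m) = (m + card J) choose card J"
proof (induction J arbitrary: m rule: finite_induct)
  case empty
  have "bounded_vectors {} m = {\<lambda>_. 0}" by (auto simp: bounded_vectors_def)
  then show ?case by simp
next
  case (insert a J)
  let ?k = "card J"
  have fin: "finite (bounded_vectors J m')" for m'
    using insert.IH[of m'] by (metis card.infinite binomial_eq_0_iff not_le le_add2)
  have "inj_on (\<lambda>(c, g). g(a := c)) (SIGMA c:{..m}. bounded_vectors J (m - c))"
  proof (rule inj_onI, clarsimp)
    fix c g c' g'
    assume "g \<in> bounded_vectors J (m - c)" "g' \<in> bounded_vectors J (m - c')" "g(a := c) = g'(a := c')"
    moreover have "g a = 0" "g' a = 0"
      using calculation insert.hyps by (auto simp: bounded_vectors_def)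
    ultimately show "c = c' \<and> g = g'" by (metis fun_upd_idem_iff fun_upd_upd fun_upd_same)
  qed
  then have "card (bounded_vectors (insert a J) m)
               = card (SIGMA c:{..m}. bounded_vectors J (m - c))"
    using bounded_vectors_insert[OF insert.hyps(2,1)] by (simp add: card_image)
  also have "\<dots> = (\<Sum>c\<le>m. (m - c + ?k) choose (m - c))"
    using fin insert.IH by (simp add: card_SigmaI binomial_symmetric[of ?k])
  also have "\<dots> = (\<Sum>c\<le>m. (?k + c) choose c)"
    by (rule sum.reindex_bij_witness[of _ "\<lambda>c. m - c" "\<lambda>c. m - c"]) (auto simp: add.commute)
  also have "\<dots> = Suc (?k + m) choose m" by (rule sum_choose_lower)
  also have "\<dots> = (m + card (insert a J)) choose card (insert a J)"
    using insert.hyps by (simp add: binomial_symmetric[of m] add.commute)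
  finally show ?case .
qed

lemma finite_bounded_vectors: "finite J \<Longrightarrow> finite (bounded_vectors J m)"
  using card_bounded_vectors[of J m] by (metis card.infinite binomial_eq_0_iff not_le le_add2)

lemma finite_positive_bounded_vectors: "finite J \<Longrightarrow> finite (positive_bounded_vectors J m)"
  by (rule finite_subset[OF _ finite_bounded_vectors[of J m]])
    (auto simp: positive_bounded_vectors_def bounded_vectors_def)

lemma positive_bounded_vectors_eq_image:
  assumes "card J \<le> m"
  shows "positive_bounded_vectors J m
           = (\<lambda>g i. if i \<in> J then g i + 1 else 0) ` bounded_vectors J (m - card J)"
proof (intro Set.set_eqI iffI)
  let ?e = "\<lambda>g i. if i \<in> J then g i + 1 else (0::nat)"
  have sum_shift: "sum (\<lambda>i. g i + 1) J = sum g J + card J" for g :: "nat \<Rightarrow> nat"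
    by (simp only: sum.distrib) simp
  {
    fix f assume f: "f \<in> positive_bounded_vectors J m"
    have "sum f J = sum (\<lambda>i. (f i - 1) + 1) J"
      using f by (intro sum.cong) (auto simp: positive_bounded_vectors_def)
    also have "\<dots> = sum (\<lambda>i. f i - 1) J + card J" by (rule sum_shift)
    finally have "(\<lambda>i. f i - 1) \<in> bounded_vectors J (m - card J)"
      using f by (auto simp: positive_bounded_vectors_def bounded_vectors_def)
    moreover have "f = ?e (\<lambda>i. f i - 1)"
      using f by (auto simp: positive_bounded_vectors_def fun_eq_iff)
    ultimately show "f \<in> ?e ` bounded_vectors J (m - card J)"
      by (rule rev_image_eqI[of "\<lambda>i. f i - 1"])
  next
    fix f assume "f \<in> ?e ` bounded_vectors J (m - card J)"
    then obtain g where g: "g \<in> bounded_vectors J (m - card J)" "f = ?e g" by auto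
    have "sum f J = sum (\<lambda>i. g i + 1) J" using g by (intro sum.cong) auto
    also have "\<dots> = sum g J + card J" by (rule sum_shift)
    finally show "f \<in> positive_bounded_vectors J m"
      using g assms by (auto simp: positive_bounded_vectors_def bounded_vectors_def)
  }
qed

lemma positive_bounded_vectors_empty:
  assumes "m < card J"
  shows "positive_bounded_vectors J m = {}"
proof (rule ccontr)
  assume "positive_bounded_vectors J m \<noteq> {}"
  then obtain f where f: "f \<in> positive_bounded_vectors J m" by auto
  have "card J = (\<Sum>i\<in>J. 1::nat)" by simp
  also have "\<dots> \<le> sum f J"
    using f by (intro sum_mono) (auto simp: positive_bounded_vectors_def Suc_le_eq)
  also have "\<dots> \<le> m" using f by (auto simp: positive_bounded_vectors_def)
  finally show False using assms by simp
qed

lemma card_positive_bounded_vectors: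
  assumes "finite J"
  shows "card (positive_bounded_vectors J m) = m choose card J"
proof (cases "card J \<le> m")
  case True
  have "inj_on (\<lambda>g i. if i \<in> J then g i + 1 else (0::nat)) (bounded_vectors J (m - card J))"
  proof (rule inj_onI)
    fix g g' assume "g \<in> bounded_vectors J (m - card J)" "g' \<in> bounded_vectors J (m - card J)"
      "(\<lambda>i. if i \<in> J then g i + 1 else (0::nat)) = (\<lambda>i. if i \<in> J then g' i + 1 else 0)"
    then have "g i = g' i" for i
      by (cases "i \<in> J") (auto simp: bounded_vectors_def dest: fun_cong[where x=i])
    then show "g = g'" by auto
  qed
  then show ?thesis
    using positive_bounded_vectors_eq_image[OF True] card_bounded_vectors[OF assms] True
    by (simp add: card_image)
qed (simp add: positive_bounded_vectors_empty)

lemma sum_lessThan_split_0: "(q::nat) \<ge> 1 \<Longrightarrow> (\<Sum>i<q. f i) = f 0 + (\<Sum>i\<in>{1..<q}. f i)"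
  by (simp add: lessThan_atLeast0 sum.atLeast_Suc_lessThan)

lemma simplex_entry_le:
  assumes "x \<in> simplex q n"
  shows "x i \<le> n"
proof (cases "i < q")
  case True
  then have "x i \<le> (\<Sum>i<q. x i)" by (intro member_le_sum) auto
  then show ?thesis using assms by (simp add: simplex_def)
qed (use assms in \<open>simp add: simplex_def\<close>)

lemma simplex_eqI:
  assumes "x \<in> simplex q n" "y \<in> simplex q n" "\<And>i. i < q \<Longrightarrow> x i = y i"
  shows "x = y"
proof
  fix i show "x i = y i" using assms by (cases "i < q") (auto simp: simplex_def)
qed

lemma simplex_eq_image_bounded_vectors:
  assumes "q \<ge> 1"
  shows "simplex q n = (\<lambda>f. f(0 := n - sum f {1..<q})) ` bounded_vectors {1..<q} n"
proof (intro Set.set_eqI iffI)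
  fix x assume x: "x \<in> simplex q n"
  have tail: "sum (x(0 := 0)) {1..<q} = sum x {1..<q}" by (intro sum.cong) auto
  have s: "x 0 + sum x {1..<q} = n"
    using x sum_lessThan_split_0[OF assms, of x] by (simp add: simplex_def)
  then have "x(0 := 0) \<in> bounded_vectors {1..<q} n"
    using x tail by (auto simp: bounded_vectors_def simplex_def)
  moreover have "x = (\<lambda>f. f(0 := n - sum f {1..<q})) (x(0 := 0))"
    using s tail by (auto simp: fun_eq_iff)
  ultimately show "x \<in> (\<lambda>f. f(0 := n - sum f {1..<q})) ` bounded_vectors {1..<q} n" by blast
next
  fix x assume "x \<in> (\<lambda>f. f(0 := n - sum f {1..<q})) ` bounded_vectors {1..<q} n"
  then obtain f where f: "f \<in> bounded_vectors {1..<q} n" "x = f(0 := n - sum f {1..<q})" by auto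
  have "sum x {1..<q} = sum f {1..<q}" using f by (intro sum.cong) auto
  then have "(\<Sum>i<q. x i) = n"
    using f sum_lessThan_split_0[OF assms, of x] by (simp add: bounded_vectors_def)
  then show "x \<in> simplex q n" using f assms by (auto simp: bounded_vectors_def simplex_def)
qed

lemma card_simplex:
  assumes "q \<ge> 1"
  shows "card (simplex q n) = (n + q - 1) choose (q - 1)"
proof -
  have "inj_on (\<lambda>f. f(0 := n - sum f {1..<q})) (bounded_vectors {1..<q} n)"
  proof (rule inj_onI)
    fix f g assume "f \<in> bounded_vectors {1..<q} n" "g \<in> bounded_vectors {1..<q} n"
      "f(0 := n - sum f {1..<q}) = g(0 := n - sum g {1..<q})"
    then have "f i = g i" for i
      by (cases "i = 0") (auto simp: bounded_vectors_def dest: fun_cong[where x=i])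
    then show "f = g" by auto
  qed
  then show ?thesis
    using simplex_eq_image_bounded_vectors[OF assms] card_bounded_vectors[of "{1..<q}" n] assms
    by (simp add: card_image)
qed

lemma finite_simplex: "q \<ge> 1 \<Longrightarrow> finite (simplex q n)"
  by (metis simplex_eq_image_bounded_vectors finite_bounded_vectors finite_atLeastLessThan
      finite_imageI)

definition simplex_interior :: "nat \<Rightarrow> nat \<Rightarrow> nat \<Rightarrow> (nat \<Rightarrow> nat) set" where
  "simplex_interior q n r = {x \<in> simplex q n. \<forall>i<q. r \<le> x i}"

lemma simplex_interior_eq_image:
  assumes "q * r \<le> n"
  shows "simplex_interior q n r = (\<lambda>g i. if i < q then g i + r else 0) ` simplex q (n - q * r)"
proof (intro Set.set_eqI iffI)
  let ?e = "\<lambda>g i. if i < q then g i + r else (0::nat)"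
  have sum_shift: "(\<Sum>i<q. g i + r) = (\<Sum>i<q. g i) + q * r" for g
    by (simp only: sum.distrib) simp
  {
    fix x assume x: "x \<in> simplex_interior q n r"
    have "(\<Sum>i<q. x i) = (\<Sum>i<q. (x i - r) + r)"
      using x by (intro sum.cong) (auto simp: simplex_interior_def)
    then have "(\<lambda>i. x i - r) \<in> simplex q (n - q * r)"
      using x by (auto simp: simplex_interior_def simplex_def sum_shift)
    moreover have "x = ?e (\<lambda>i. x i - r)"
      using x by (auto simp: simplex_interior_def simplex_def fun_eq_iff)
    ultimately show "x \<in> ?e ` simplex q (n - q * r)" by (rule rev_image_eqI[of "\<lambda>i. x i - r"])
  next
    fix x assume "x \<in> ?e ` simplex q (n - q * r)"
    then obtain g where g: "g \<in> simplex q (n - q * r)" "x = ?e g" by auto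
    have "(\<Sum>i<q. x i) = (\<Sum>i<q. g i + r)" using g by (intro sum.cong) auto
    then show "x \<in> simplex_interior q n r"
      using g assms by (auto simp: simplex_interior_def simplex_def sum_shift)
  }
qed

lemma simplex_interior_empty:
  assumes "n < q * r"
  shows "simplex_interior q n r = {}"
proof (rule ccontr)
  assume "simplex_interior q n r \<noteq> {}"
  then obtain x where x: "x \<in> simplex_interior q n r" by auto
  have "q * r = (\<Sum>i<q. r)" by simp
  also have "\<dots> \<le> (\<Sum>i<q. x i)" using x by (intro sum_mono) (auto simp: simplex_interior_def)
  also have "\<dots> = n" using x by (auto simp: simplex_interior_def simplex_def)
  finally show False using assms by simp
qed

lemma card_simplex_interior:
  assumes "q \<ge> 1"
  shows "card (simplex_interior q n r)
           = (if q * r \<le> n then (n - q * r + q - 1) choose (q - 1) else 0)"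
proof (cases "q * r \<le> n")
  case True
  have "inj_on (\<lambda>g i. if i < q then g i + r else (0::nat)) (simplex q (n - q * r))"
  proof (rule inj_onI)
    fix g g' assume g: "g \<in> simplex q (n - q * r)" "g' \<in> simplex q (n - q * r)"
      and "(\<lambda>i. if i < q then g i + r else (0::nat)) = (\<lambda>i. if i < q then g' i + r else 0)"
    then have "g i = g' i" if "i < q" for i using that by (auto dest: fun_cong[where x=i])
    then show "g = g'" using g by (blast intro: simplex_eqI)
  qed
  then show ?thesis
    using simplex_interior_eq_image[OF True] card_simplex[OF assms] True by (simp add: card_image)
qed (simp add: simplex_interior_empty)

text \<open>Telescoping with Pascal's rule; \<open>ibinom\<close> vanishes once \<open>j > n + 1\<close>.\<close>
lemma sum_ibinom_telescope:
  "(\<Sum>j = 1..t. real (ibinom (int n + int (Suc (Suc p)) - 1 - int j) p))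
     = real ((n + Suc p) choose Suc p) - real (if t \<le> n then (n - t + Suc p) choose Suc p else 0)"
proof (induction t)
  case 0
  then show ?case by simp
next
  case (Suc t)
  have summand: "ibinom (int n + int (Suc (Suc p)) - 1 - int (Suc t)) p
      = (if Suc t \<le> n + 1 then (n - t + p) choose p else 0)"
  proof (cases "Suc t \<le> n + 1")
    case True
    then have e: "int n + int (Suc (Suc p)) - 1 - int (Suc t) = int (n - t + p)" by simp
    show ?thesis unfolding ibinom_def e nat_int using True by simp
  qed (simp add: ibinom_def)
  show ?case
  proof (cases "Suc t \<le> n")
    case True
    then have "(n - t + Suc p) choose Suc p = ((n - Suc t + Suc p) choose Suc p) + ((n - t + p) choose p)"
      by (simp add: Suc_diff_Suc)
    then show ?thesis using Suc.IH True summand by simp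
  next
    case False
    then show ?thesis using Suc.IH summand by (cases "t = n") simp_all
  qed
qed

lemma card_simplex_boundary:
  assumes "q \<ge> 2"
  shows "real (card (simplex q n - simplex_interior q n r))
           = (\<Sum>j = 1..q * r. real (ibinom (int n + int q - 1 - int j) (q - 2)))"
proof -
  obtain p where p: "q = Suc (Suc p)" using assms by (metis add_2_eq_Suc le_Suc_ex)
  have "simplex_interior q n r \<subseteq> simplex q n" by (auto simp: simplex_interior_def)
  then have "real (card (simplex q n - simplex_interior q n r))
               = real (card (simplex q n)) - real (card (simplex_interior q n r))"
    using finite_simplex[of q n] assms by (simp add: card_Diff_subset card_mono of_nat_diff finite_subset)
  also have "\<dots> = (\<Sum>j = 1..q * r. real (ibinom (int n + int q - 1 - int j) (q - 2)))"
    using sum_ibinom_telescope[of n p "q * r"] card_simplex[of q n] card_simplex_interior[of q n r]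
    by (simp add: p)
  finally show ?thesis .
qed

section \<open>Perturbations\<close>

text \<open>With \<open>a\<close> positive on \<open>J\<close>, the set \<open>J\<close> is recovered from \<open>signed_vector J (a, b)\<close> as the
  set of negative entries.\<close>
definition signed_vector :: "nat set \<Rightarrow> (nat \<Rightarrow> nat) \<times> (nat \<Rightarrow> nat) \<Rightarrow> nat \<Rightarrow> int" where
  "signed_vector J p = (\<lambda>i. if i \<in> J then - int (fst p i) else int (snd p i))"

text \<open>Integer vectors supported on \<open>K\<close> whose negative parts sum to at most \<open>r\<close> and whose
  positive parts sum to at most \<open>s\<close>, sorted by the set \<open>J\<close> of negative entries.\<close>
definition perturbations :: "nat set \<Rightarrow> nat \<Rightarrow> nat \<Rightarrow> (nat \<Rightarrow> int) set" where
  "perturbations K r s = (\<Union>J\<in>Pow K.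
     signed_vector J ` (positive_bounded_vectors J r \<times> bounded_vectors (K - J) s))"

lemma negative_set_signed_vector:
  assumes "p \<in> positive_bounded_vectors J r \<times> bounded_vectors (K - J) s" "J \<subseteq> K"
  shows "{i. signed_vector J p i < 0} = J"
  using assms by (auto simp: signed_vector_def positive_bounded_vectors_def bounded_vectors_def)

lemma inj_on_signed_vector:
  "inj_on (signed_vector J) (positive_bounded_vectors J r \<times> bounded_vectors (K - J) s)"
proof (rule inj_onI)
  fix p p'
  assume p: "p \<in> positive_bounded_vectors J r \<times> bounded_vectors (K - J) s"
    and p': "p' \<in> positive_bounded_vectors J r \<times> bounded_vectors (K - J) s"
    and eq: "signed_vector J p = signed_vector J p'"
  have "fst p i = fst p' i \<and> snd p i = snd p' i" for i
    using p p' fun_cong[OF eq, of i]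
    by (cases "i \<in> J") (auto simp: signed_vector_def positive_bounded_vectors_def bounded_vectors_def)
  then show "p = p'" by (simp add: prod_eq_iff fun_eq_iff)
qed

lemma card_perturbations:
  assumes "finite K"
  shows "card (perturbations K r s)
           = (\<Sum>J\<in>Pow K. (r choose card J) * ((s + card (K - J)) choose card (K - J)))"
  unfolding perturbations_def
proof (subst card_UN_disjoint)
  show "finite (Pow K)" using assms by simp
  show "\<forall>J\<in>Pow K. finite (signed_vector J ` (positive_bounded_vectors J r \<times> bounded_vectors (K - J) s))"
    using assms by (auto intro!: finite_positive_bounded_vectors finite_bounded_vectors
        intro: finite_subset)
  show "\<forall>J\<in>Pow K. \<forall>J'\<in>Pow K. J \<noteq> J' \<longrightarrow>
      signed_vector J ` (positive_bounded_vectors J r \<times> bounded_vectors (K - J) s) \<inter>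
      signed_vector J' ` (positive_bounded_vectors J' r \<times> bounded_vectors (K - J') s) = {}"
  proof (intro ballI impI)
    fix J J' assume J: "J \<in> Pow K" and J': "J' \<in> Pow K" and "J \<noteq> J'"
    have "signed_vector J p \<noteq> signed_vector J' p'"
      if "p \<in> positive_bounded_vectors J r \<times> bounded_vectors (K - J) s"
        "p' \<in> positive_bounded_vectors J' r \<times> bounded_vectors (K - J') s" for p p'
      using negative_set_signed_vector[OF that(1)] negative_set_signed_vector[OF that(2)] J J'
        \<open>J \<noteq> J'\<close> by auto
    then show "signed_vector J ` (positive_bounded_vectors J r \<times> bounded_vectors (K - J) s) \<inter>
        signed_vector J' ` (positive_bounded_vectors J' r \<times> bounded_vectors (K - J') s) = {}"
      by blast
  qed
  show "(\<Sum>J\<in>Pow K. card (signed_vector J ` (positive_bounded_vectors J r \<times> bounded_vectors (K - J) s)))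
      = (\<Sum>J\<in>Pow K. (r choose card J) * ((s + card (K - J)) choose card (K - J)))"
    using assms
    by (intro sum.cong refl)
      (simp add: card_image[OF inj_on_signed_vector] card_cartesian_product finite_subset
        card_positive_bounded_vectors card_bounded_vectors)
qed

lemma sum_Pow_by_card:
  assumes "finite K"
  shows "(\<Sum>J\<in>Pow K. g (card J)) = (\<Sum>j\<le>card K. (card K choose j) * (g j :: nat))"
proof -
  have "(\<Sum>J\<in>Pow K. g (card J)) = (\<Sum>j\<le>card K. \<Sum>J\<in>{J\<in>Pow K. card J = j}. g (card J))"
    by (rule sum.group[symmetric]) (use assms in \<open>auto intro: card_mono\<close>)
  also have "\<dots> = (\<Sum>j\<le>card K. (card K choose j) * g j)"
  proof (rule sum.cong[OF refl])
    fix j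
    have "(\<Sum>J\<in>{J\<in>Pow K. card J = j}. g (card J)) = (\<Sum>J\<in>{J. J \<subseteq> K \<and> card J = j}. g j)"
      by (intro sum.cong) auto
    then show "(\<Sum>J\<in>{J\<in>Pow K. card J = j}. g (card J)) = (card K choose j) * g j"
      using n_subsets[OF assms] by simp
  qed
  finally show ?thesis .
qed

lemma card_perturbations_eq_beta:
  assumes "q \<ge> 1"
  shows "card (perturbations {1..<q} ((h + 1) div 2) (h div 2)) = beta h q"
proof -
  let ?K = "{1..<q}" and ?r = "(h + 1) div 2" and ?s = "h div 2"
  let ?g = "\<lambda>j. (?r choose j) * ((?s + (card ?K - j)) choose (card ?K - j))"
  have "card (perturbations ?K ?r ?s) = (\<Sum>J\<in>Pow ?K. ?g (card J))"
    unfolding card_perturbations[OF finite_atLeastLessThan]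
    by (intro sum.cong refl) (auto simp: card_Diff_subset finite_subset)
  also have "\<dots> = (\<Sum>j\<le>card ?K. (card ?K choose j) * ?g j)"
    by (rule sum_Pow_by_card) simp
  also have "\<dots> = beta h q" unfolding beta_def using assms by (simp add: mult.assoc)
  finally show ?thesis .
qed

lemma perturbationsD:
  assumes "t \<in> perturbations K r s" "finite K"
  shows "\<And>i. i \<notin> K \<Longrightarrow> t i = 0"
    and "(\<Sum>i\<in>K. max (t i) 0) \<le> int s"
    and "(\<Sum>i\<in>K. max (- t i) 0) \<le> int r"
proof -
  obtain J a b where J: "J \<subseteq> K" and a: "a \<in> positive_bounded_vectors J r"
    and b: "b \<in> bounded_vectors (K - J) s" and t: "t = signed_vector J (a, b)"
    using assms(1) unfolding perturbations_def by auto
  show "\<And>i. i \<notin> K \<Longrightarrow> t i = 0"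
    using J a b t by (auto simp: signed_vector_def positive_bounded_vectors_def bounded_vectors_def)
  have pos: "max (t i) 0 = int (b i)" and neg: "max (- t i) 0 = int (a i)" for i
    using t a b by (auto simp: signed_vector_def positive_bounded_vectors_def bounded_vectors_def)
  have "sum b K = sum b (K - J)"
    using b assms(2) by (intro sum.mono_neutral_right) (auto simp: bounded_vectors_def)
  then show "(\<Sum>i\<in>K. max (t i) 0) \<le> int s"
    using b unfolding pos by (simp add: bounded_vectors_def flip: of_nat_sum)
  have "sum a K = sum a J"
    using a assms(2) J by (intro sum.mono_neutral_right) (auto simp: positive_bounded_vectors_def)
  then show "(\<Sum>i\<in>K. max (- t i) 0) \<le> int r"
    using a unfolding neg by (simp add: positive_bounded_vectors_def flip: of_nat_sum)
qed

lemma perturbation_lower_bound: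
  assumes "t \<in> perturbations K r s" "finite K"
  shows "t i \<ge> - int r"
proof (cases "i \<in> K")
  case True
  have "max (- t i) 0 \<le> (\<Sum>i\<in>K. max (- t i) 0)"
    using True assms(2) by (intro member_le_sum) auto
  then show ?thesis using perturbationsD(3)[OF assms] by linarith
qed (use perturbationsD(1)[OF assms] in simp)

section \<open>Packing perturbed interior points\<close>

text \<open>Coordinate \<open>0\<close> absorbs the total change, so that the sum moves from \<open>n\<close> to \<open>n + s - r\<close>.\<close>
definition balanced_perturbation :: "nat \<Rightarrow> nat \<Rightarrow> nat \<Rightarrow> (nat \<Rightarrow> int) \<Rightarrow> nat \<Rightarrow> int" where
  "balanced_perturbation q r s t = t(0 := int s - int r - sum t {1..<q})"

definition perturb :: "nat \<Rightarrow> nat \<Rightarrow> nat \<Rightarrow> (nat \<Rightarrow> nat) \<Rightarrow> (nat \<Rightarrow> int) \<Rightarrow> nat \<Rightarrow> nat" where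
  "perturb q r s x t = (\<lambda>i. nat (int (x i) + balanced_perturbation q r s t i))"

lemma perturb_nonneg:
  assumes x: "x \<in> simplex_interior q n r" and t: "t \<in> perturbations {1..<q} r s" and q: "q \<ge> 1"
  shows "int (x i) + balanced_perturbation q r s t i \<ge> 0"
proof (cases "i = 0")
  case True
  have "sum t {1..<q} \<le> (\<Sum>i\<in>{1..<q}. max (t i) 0)" by (intro sum_mono) auto
  then have "sum t {1..<q} \<le> int s" using perturbationsD(2)[OF t] by simp
  moreover have "x 0 \<ge> r" using x q by (auto simp: simplex_interior_def)
  ultimately show ?thesis using True by (simp add: balanced_perturbation_def)
next
  case False
  have "t i \<ge> - int r" by (rule perturbation_lower_bound[OF t finite_atLeastLessThan])
  moreover have "i < q \<Longrightarrow> x i \<ge> r" using x by (auto simp: simplex_interior_def)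
  ultimately show ?thesis
    using False perturbationsD(1)[OF t] by (cases "i < q") (auto simp: balanced_perturbation_def)
qed

lemma perturb_eq_iff:
  assumes x: "x \<in> simplex_interior q n r" and y: "y \<in> simplex_interior q n r"
    and t: "t \<in> perturbations {1..<q} r s" and t': "t' \<in> perturbations {1..<q} r s" and q: "q \<ge> 1"
  shows "perturb q r s x t = perturb q r s y t'
    \<longleftrightarrow> (\<forall>i. int (x i) - int (y i) = balanced_perturbation q r s t' i - balanced_perturbation q r s t i)"
  using perturb_nonneg[OF x t q] perturb_nonneg[OF y t' q]
  by (auto simp: perturb_def fun_eq_iff eq_nat_nat_iff algebra_simps)

lemma perturb_mem_simplex:
  assumes x: "x \<in> simplex_interior q n r" and t: "t \<in> perturbations {1..<q} r s"
    and q: "q \<ge> 1" and "s \<le> r"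
  shows "perturb q r s x t \<in> simplex q (n + s - r)"
proof -
  let ?b = "balanced_perturbation q r s t"
  have xs: "x \<in> simplex q n" using x by (simp add: simplex_interior_def)
  have "r \<le> x 0" using x q by (auto simp: simplex_interior_def)
  then have "r \<le> n" using simplex_entry_le[OF xs, of 0] by simp
  have "int (\<Sum>i<q. perturb q r s x t i) = (\<Sum>i<q. int (x i)) + (\<Sum>i<q. ?b i)"
    using perturb_nonneg[OF x t q] by (simp add: perturb_def of_nat_sum sum.distrib)
  also have "(\<Sum>i<q. ?b i) = int s - int r"
    by (simp add: sum_lessThan_split_0[OF q] balanced_perturbation_def)
  also have "(\<Sum>i<q. int (x i)) = int n" using xs by (simp add: simplex_def flip: of_nat_sum)
  finally have "(\<Sum>i<q. perturb q r s x t i) = n + s - r" using \<open>r \<le> n\<close> by linarith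
  moreover have "i \<ge> q \<Longrightarrow> perturb q r s x t i = 0" for i
    using xs perturbationsD(1)[OF t finite_atLeastLessThan] q
    by (simp add: perturb_def balanced_perturbation_def simplex_def)
  ultimately show ?thesis by (simp add: simplex_def)
qed

lemma inj_on_perturb:
  assumes "x \<in> simplex_interior q n r" "q \<ge> 1"
  shows "inj_on (perturb q r s x) (perturbations {1..<q} r s)"
proof (rule inj_onI)
  fix t t' assume t: "t \<in> perturbations {1..<q} r s" and t': "t' \<in> perturbations {1..<q} r s"
    and "perturb q r s x t = perturb q r s x t'"
  then have same: "balanced_perturbation q r s t' i = balanced_perturbation q r s t i" for i
    using perturb_eq_iff[OF assms(1) assms(1) t t' assms(2)] by simp
  have "t i = t' i" for i
  proof (cases "i = 0")
    case True
    then show ?thesis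
      using perturbationsD(1)[OF t finite_atLeastLessThan] perturbationsD(1)[OF t' finite_atLeastLessThan]
      by simp
  qed (use same[of i] in \<open>simp add: balanced_perturbation_def\<close>)
  then show "t = t'" by auto
qed

lemma abs_sum_plus_sum_abs_le:
  fixes d :: "'a \<Rightarrow> int"
  assumes "(\<Sum>i\<in>K. max (d i) 0) \<le> B" "(\<Sum>i\<in>K. max (- d i) 0) \<le> B"
  shows "\<bar>sum d K\<bar> + (\<Sum>i\<in>K. \<bar>d i\<bar>) \<le> 2 * B"
proof -
  have "(\<Sum>i\<in>K. \<bar>d i\<bar>) = (\<Sum>i\<in>K. max (d i) 0) + (\<Sum>i\<in>K. max (- d i) 0)"
    by (simp only: sum.distrib[symmetric]) (intro sum.cong; auto)
  moreover have "sum d K = (\<Sum>i\<in>K. max (d i) 0) - (\<Sum>i\<in>K. max (- d i) 0)"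
    by (simp only: sum_subtractf[symmetric]) (intro sum.cong; auto)
  ultimately show ?thesis using assms by linarith
qed

lemma d1_eq_sum_abs_int: "d1 q x y = real_of_int (\<Sum>i<q. \<bar>int (x i) - int (y i)\<bar>) / 2"
  by (simp add: d1_def of_int_sum)

text \<open>If two perturbed points coincide, \<open>x - y\<close> is the difference of two perturbations.\<close>
lemma d1_le_of_perturb_eq:
  assumes x: "x \<in> simplex_interior q n r" and y: "y \<in> simplex_interior q n r"
    and t: "t \<in> perturbations {1..<q} r s" and t': "t' \<in> perturbations {1..<q} r s" and q: "q \<ge> 1"
    and eq: "perturb q r s x t = perturb q r s y t'"
  shows "d1 q x y \<le> real (r + s)"
proof -
  let ?K = "{1..<q}"
  define d where "d i = t' i - t i" for i
  have diff: "int (x i) - int (y i)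
      = balanced_perturbation q r s t' i - balanced_perturbation q r s t i" for i
    using eq perturb_eq_iff[OF x y t t' q] by blast
  have "(\<Sum>i<q. \<bar>int (x i) - int (y i)\<bar>) = \<bar>sum d ?K\<bar> + (\<Sum>i\<in>?K. \<bar>d i\<bar>)"
    by (simp add: sum_lessThan_split_0[OF q] diff d_def balanced_perturbation_def sum_subtractf
        abs_minus_commute)
  also have "\<dots> \<le> 2 * int (r + s)"
  proof (rule abs_sum_plus_sum_abs_le)
    have "(\<Sum>i\<in>?K. max (d i) 0) \<le> (\<Sum>i\<in>?K. max (t' i) 0) + (\<Sum>i\<in>?K. max (- t i) 0)"
      by (simp only: sum.distrib[symmetric]) (intro sum_mono, simp add: d_def)
    then show "(\<Sum>i\<in>?K. max (d i) 0) \<le> int (r + s)"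
      using perturbationsD(2,3)[OF t' finite_atLeastLessThan] perturbationsD(3)[OF t finite_atLeastLessThan]
      by simp
    have "(\<Sum>i\<in>?K. max (- d i) 0) \<le> (\<Sum>i\<in>?K. max (t i) 0) + (\<Sum>i\<in>?K. max (- t' i) 0)"
      by (simp only: sum.distrib[symmetric]) (intro sum_mono, simp add: d_def)
    then show "(\<Sum>i\<in>?K. max (- d i) 0) \<le> int (r + s)"
      using perturbationsD(2)[OF t finite_atLeastLessThan] perturbationsD(3)[OF t' finite_atLeastLessThan]
      by simp
  qed
  finally have "real_of_int (\<Sum>i<q. \<bar>int (x i) - int (y i)\<bar>) \<le> real_of_int (2 * int (r + s))"
    by (simp only: of_int_le_iff)
  then show ?thesis unfolding d1_eq_sum_abs_int by simp
qed

lemma card_mult_le_of_disjoint_images: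
  assumes "finite A" "finite U"
    and "\<And>x. x \<in> A \<Longrightarrow> inj_on (F x) T" "\<And>x. x \<in> A \<Longrightarrow> F x ` T \<subseteq> U"
    and "\<And>x y. x \<in> A \<Longrightarrow> y \<in> A \<Longrightarrow> x \<noteq> y \<Longrightarrow> F x ` T \<inter> F y ` T = {}"
  shows "card A * card T \<le> card U"
proof -
  have "card A * card T = (\<Sum>x\<in>A. card (F x ` T))"
    using assms(3) by (simp add: card_image)
  also have "\<dots> = card (\<Union>x\<in>A. F x ` T)"
    using assms finite_subset[OF assms(4) assms(2)] by (intro card_UN_disjoint[symmetric]) auto
  also have "\<dots> \<le> card U" using assms by (intro card_mono) auto
  finally show ?thesis .
qed

lemma card_code_in_interior:
  assumes q: "q \<ge> 1" and "s \<le> r" and C: "C \<subseteq> simplex_interior q n r"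
    and far: "\<And>x y. x \<in> C \<Longrightarrow> y \<in> C \<Longrightarrow> x \<noteq> y \<Longrightarrow> d1 q x y > real (r + s)"
  shows "card C * card (perturbations {1..<q} r s) \<le> (n + s - r + q - 1) choose (q - 1)"
proof -
  have "card C * card (perturbations {1..<q} r s) \<le> card (simplex q (n + s - r))"
  proof (rule card_mult_le_of_disjoint_images)
    show "finite C"
      using C finite_simplex[OF q] by (auto simp: simplex_interior_def intro: finite_subset)
    show "finite (simplex q (n + s - r))" by (rule finite_simplex[OF q])
    fix x assume x: "x \<in> C"
    show "inj_on (perturb q r s x) (perturbations {1..<q} r s)"
      using x C q by (intro inj_on_perturb) auto
    show "perturb q r s x ` perturbations {1..<q} r s \<subseteq> simplex q (n + s - r)"
      using x C q \<open>s \<le> r\<close> perturb_mem_simplex by blast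
    fix y assume y: "y \<in> C" and "x \<noteq> y"
    have "perturb q r s x t \<noteq> perturb q r s y t'"
      if "t \<in> perturbations {1..<q} r s" "t' \<in> perturbations {1..<q} r s" for t t'
      using d1_le_of_perturb_eq[OF _ _ that q] far[OF x y \<open>x \<noteq> y\<close>] x y C by fastforce
    then show "perturb q r s x ` perturbations {1..<q} r s \<inter> perturb q r s y ` perturbations {1..<q} r s = {}"
      by blast
  qed
  then show ?thesis using card_simplex[OF q] by simp
qed

section \<open>Codes from \<open>B\<^sub>h\<close> sets\<close>

context comm_group
begin

lemma finprod_pow_add:
  assumes "\<forall>i<q. b i \<in> carrier G"
  shows "(\<Otimes>i\<in>{..<q}. b i [^] (f i + g i :: nat))
           = (\<Otimes>i\<in>{..<q}. b i [^] f i) \<otimes> (\<Otimes>i\<in>{..<q}. b i [^] g i)"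
proof -
  have "(\<Otimes>i\<in>{..<q}. b i [^] (f i + g i :: nat)) = (\<Otimes>i\<in>{..<q}. b i [^] f i \<otimes> b i [^] g i)"
    using assms by (intro finprod_cong') (auto simp: nat_pow_mult)
  also have "\<dots> = (\<Otimes>i\<in>{..<q}. b i [^] f i) \<otimes> (\<Otimes>i\<in>{..<q}. b i [^] g i)"
    using assms by (intro finprod_multf) auto
  finally show ?thesis .
qed

text \<open>Remove the common part \<open>min x y\<close>; the two remainders have equal size \<open>d1 q x y \<le> h\<close>,
  and after adding \<open>h - d1 q x y\<close> to coordinate \<open>0\<close> of both they collide in \<open>simplex q h\<close>.\<close>
lemma Bh_set_equal_weight_far:
  assumes B: "Bh_set G h q b" and q: "q \<ge> 1"
    and x: "x \<in> simplex q n" and y: "y \<in> simplex q n" and "x \<noteq> y"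
    and eq: "(\<Otimes>i\<in>{..<q}. b i [^] x i) = (\<Otimes>i\<in>{..<q}. b i [^] y i)"
  shows "d1 q x y > real h"
proof (rule ccontr)
  assume near: "\<not> d1 q x y > real h"
  have b: "\<forall>i<q. b i \<in> carrier G" using B by (simp add: Bh_set_def)
  let ?P = "\<lambda>f. \<Otimes>i\<in>{..<q}. b i [^] (f i :: nat)"
  define m where "m i = min (x i) (y i)" for i
  define u where "u i = x i - m i" for i
  define v where "v i = y i - m i" for i
  have xu: "x = (\<lambda>i. m i + u i)" and yv: "y = (\<lambda>i. m i + v i)"
    by (auto simp: m_def u_def v_def)
  have "?P m \<otimes> ?P u = ?P m \<otimes> ?P v"
    using eq finprod_pow_add[OF b, of m u] finprod_pow_add[OF b, of m v] xu yv by simp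
  then have Puv: "?P u = ?P v" using b by (simp add: finprod_closed Pi_iff)
  have "sum m {..<q} + sum u {..<q} = n" "sum m {..<q} + sum v {..<q} = n"
    using x y by (simp_all add: simplex_def xu yv sum.distrib)
  then have suv: "sum u {..<q} = sum v {..<q}" by simp
  have "\<bar>real (x i) - real (y i)\<bar> = real (u i) + real (v i)" for i
    by (cases "x i \<le> y i") (auto simp: m_def u_def v_def)
  then have "d1 q x y = real (sum u {..<q})"
    using suv by (simp add: d1_def sum.distrib flip: of_nat_sum)
  then have dh: "sum u {..<q} \<le> h" using near by linarith
  define w where "w i = (if i = 0 then h - sum u {..<q} else 0)" for i :: nat
  have "sum w {..<q} = h - sum u {..<q}" using q by (simp add: w_def)
  moreover have "\<forall>i\<ge>q. u i = 0 \<and> v i = 0 \<and> w i = 0"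
    using x y q by (auto simp: simplex_def u_def v_def w_def)
  ultimately have mu: "(\<lambda>i. u i + w i) \<in> simplex q h" and mv: "(\<lambda>i. v i + w i) \<in> simplex q h"
    using dh suv by (simp_all add: simplex_def sum.distrib)
  have Peq: "?P (\<lambda>i. u i + w i) = ?P (\<lambda>i. v i + w i)"
    using Puv finprod_pow_add[OF b, of u w] finprod_pow_add[OF b, of v w] by simp
  have "inj_on ?P (simplex q h)" using B by (simp add: Bh_set_def)
  then have "(\<lambda>i. u i + w i) = (\<lambda>i. v i + w i)" using Peq mu mv by (rule inj_onD)
  then have "u = v" by (auto simp: fun_eq_iff)
  then show False using \<open>x \<noteq> y\<close> xu yv by simp
qed

text \<open>Pigeonhole over the weight map \<open>x \<mapsto> \<Prod>\<^sub>i b\<^sub>i\<^sup>x\<^sup>\<^sub>i\<close>: all fibres are codes.\<close>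
lemma exists_code_of_Bh_set:
  assumes B: "Bh_set G h q b" and q: "q \<ge> 1" and fin: "finite (carrier G)"
  shows "\<exists>C. C \<subseteq> simplex q n \<and> (\<forall>x\<in>C. \<forall>y\<in>C. x \<noteq> y \<longrightarrow> d1 q x y > real h)
            \<and> card (simplex q n) \<le> card C * card (carrier G)"
proof -
  let ?P = "\<lambda>f. \<Otimes>i\<in>{..<q}. b i [^] (f i :: nat)"
  have "?P \<in> simplex q n \<rightarrow> carrier G"
    using B by (auto simp: Bh_set_def intro!: finprod_closed)
  moreover have "carrier G \<noteq> {}" using one_closed by blast
  ultimately obtain g where "card (simplex q n) \<le> card (?P -` {g} \<inter> simplex q n) * card (carrier G)"
    using pigeonhole_card[of ?P "simplex q n" "carrier G"] finite_simplex[OF q] fin by blast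
  moreover have "\<forall>x\<in>?P -` {g} \<inter> simplex q n. \<forall>y\<in>?P -` {g} \<inter> simplex q n.
      x \<noteq> y \<longrightarrow> d1 q x y > real h"
    using Bh_set_equal_weight_far[OF B q] by auto
  ultimately show ?thesis by blast
qed

end

section \<open>A \<open>B\<^sub>h\<close> set in a cyclic group\<close>

definition nat_mod_group :: "nat \<Rightarrow> nat monoid" where
  "nat_mod_group m = \<lparr>carrier = {..<m}, monoid.mult = (\<lambda>a b. (a + b) mod m), one = 0\<rparr>"

lemma nat_mod_group_simps [simp]:
  "carrier (nat_mod_group m) = {..<m}"
  "a \<otimes>\<^bsub>nat_mod_group m\<^esub> b = (a + b) mod m"
  "\<one>\<^bsub>nat_mod_group m\<^esub> = 0"
  by (simp_all add: nat_mod_group_def)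

lemma comm_group_nat_mod_group:
  assumes "m > 0"
  shows "comm_group (nat_mod_group m)"
proof (rule comm_groupI)
  fix x assume x: "x \<in> carrier (nat_mod_group m)"
  show "\<exists>y\<in>carrier (nat_mod_group m). y \<otimes>\<^bsub>nat_mod_group m\<^esub> x = \<one>\<^bsub>nat_mod_group m\<^esub>"
    using x assms by (intro bexI[of _ "(m - x) mod m"]) (simp_all add: mod_add_left_eq)
qed (use assms in \<open>simp_all add: mod_add_left_eq mod_add_right_eq ac_simps\<close>)

lemma nat_mod_group_pow: "a [^]\<^bsub>nat_mod_group m\<^esub> (k::nat) = (k * a) mod m"
  by (induction k) (simp_all add: mod_add_left_eq mod_add_right_eq add.commute)

lemma nat_mod_group_finprod:
  assumes m: "m > 0" and b: "\<forall>i<(q::nat). b i < m"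
  shows "(\<Otimes>\<^bsub>nat_mod_group m\<^esub>i\<in>{..<q}. b i [^]\<^bsub>nat_mod_group m\<^esub> (x i :: nat))
           = (\<Sum>i<q. x i * b i) mod m"
  using b
proof (induction q)
  case 0
  interpret comm_group "nat_mod_group m" by (rule comm_group_nat_mod_group[OF m])
  show ?case by simp
next
  case (Suc q)
  interpret comm_group "nat_mod_group m" by (rule comm_group_nat_mod_group[OF m])
  have "(\<Otimes>\<^bsub>nat_mod_group m\<^esub>i\<in>{..<Suc q}. b i [^]\<^bsub>nat_mod_group m\<^esub> x i)
      = b q [^]\<^bsub>nat_mod_group m\<^esub> x q \<otimes>\<^bsub>nat_mod_group m\<^esub>
        (\<Otimes>\<^bsub>nat_mod_group m\<^esub>i\<in>{..<q}. b i [^]\<^bsub>nat_mod_group m\<^esub> x i)"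
    unfolding lessThan_Suc
    using Suc.prems m by (intro finprod_insert) (auto simp: nat_mod_group_pow Pi_iff)
  also have "\<dots> = (x q * b q + (\<Sum>i<q. x i * b i)) mod m"
    using Suc by (simp add: nat_mod_group_pow mod_add_left_eq mod_add_right_eq)
  finally show ?case by (simp add: add.commute)
qed

lemma base_expansion_less:
  fixes x :: "nat \<Rightarrow> nat"
  assumes "\<forall>i<q. x i < B"
  shows "(\<Sum>i<q. x i * B ^ i) < B ^ q"
  using assms
proof (induction q)
  case (Suc q)
  have "(\<Sum>i<q. x i * B ^ i) < B ^ q" using Suc by simp
  then have "(\<Sum>i<Suc q. x i * B ^ i) < (x q + 1) * B ^ q" by simp
  also have "\<dots> \<le> B * B ^ q" using Suc.prems by (intro mult_right_mono) (auto simp: Suc_le_eq)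
  finally show ?case by simp
qed simp

lemma base_expansion_inj:
  fixes x y :: "nat \<Rightarrow> nat"
  assumes "\<forall>i<q. x i < B" "\<forall>i<q. y i < B" "(\<Sum>i<q. x i * B ^ i) = (\<Sum>i<q. y i * B ^ i)"
  shows "\<forall>i<q. x i = y i"
  using assms
proof (induction q)
  case (Suc q)
  let ?X = "\<Sum>i<q. x i * B ^ i" and ?Y = "\<Sum>i<q. y i * B ^ i"
  have xb: "\<forall>i<q. x i < B" and yb: "\<forall>i<q. y i < B" using Suc.prems by auto
  then have X: "?X < B ^ q" and Y: "?Y < B ^ q" using base_expansion_less by auto
  have e: "?X + x q * B ^ q = ?Y + y q * B ^ q" using Suc.prems by simp
  have "B ^ q > 0" using Suc.prems by auto
  then have "x q = y q"
    using arg_cong[OF e, of "\<lambda>z. z div B ^ q"] X Y by simp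
  moreover have "?X = ?Y"
    using arg_cong[OF e, of "\<lambda>z. z mod B ^ q"] X Y by simp
  then have "\<forall>i<q. x i = y i" using Suc.IH xb yb by blast
  ultimately show ?case by (auto simp: less_Suc_eq)
qed simp

text \<open>A word of the simplex of size \<open>h\<close> has entries \<open>\<le> h\<close>, so its weight is its
  base-\<open>(h+1)\<close> expansion, which is less than the modulus.\<close>
lemma Bh_set_powers:
  assumes "h \<ge> 1"
  shows "Bh_set (nat_mod_group ((h + 1) ^ q)) h q (\<lambda>i. (h + 1) ^ i)"
  unfolding Bh_set_def
proof (intro conjI)
  let ?B = "h + 1" let ?G = "nat_mod_group (?B ^ q)"
  have b: "\<forall>i<q. ?B ^ i < ?B ^ q" using assms by (auto intro: power_strict_increasing)
  then show "\<forall>i<q. ?B ^ i \<in> carrier ?G" by simp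
  show "inj_on (\<lambda>i. ?B ^ i) {..<q}" using assms by (auto simp: inj_on_def power_inject_exp)
  show "inj_on (\<lambda>x. \<Otimes>\<^bsub>?G\<^esub>i\<in>{..<q}. ?B ^ i [^]\<^bsub>?G\<^esub> x i) (simplex q h)"
  proof (rule inj_onI)
    fix x y assume x: "x \<in> simplex q h" and y: "y \<in> simplex q h"
      and "(\<Otimes>\<^bsub>?G\<^esub>i\<in>{..<q}. ?B ^ i [^]\<^bsub>?G\<^esub> x i) = (\<Otimes>\<^bsub>?G\<^esub>i\<in>{..<q}. ?B ^ i [^]\<^bsub>?G\<^esub> y i)"
    then have "(\<Sum>i<q. x i * ?B ^ i) mod ?B ^ q = (\<Sum>i<q. y i * ?B ^ i) mod ?B ^ q"
      using nat_mod_group_finprod[OF _ b] by simp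
    moreover have xb: "\<forall>i<q. x i < ?B" and yb: "\<forall>i<q. y i < ?B"
      using simplex_entry_le[OF x] simplex_entry_le[OF y] by (auto simp: less_Suc_eq_le)
    ultimately have "(\<Sum>i<q. x i * ?B ^ i) = (\<Sum>i<q. y i * ?B ^ i)"
      using base_expansion_less[OF xb] base_expansion_less[OF yb] by simp
    then show "x = y" using base_expansion_inj[OF xb yb] x y by (blast intro: simplex_eqI)
  qed
qed

lemma phi_attained:
  assumes "h \<ge> 1"
  obtains G :: "nat monoid" and b where "comm_group G" "finite (carrier G)"
    "card (carrier G) = phi h q" "Bh_set G h q b"
proof -
  have "\<exists>m. \<exists>(G::nat monoid) b. comm_group G \<and> finite (carrier G) \<and> card (carrier G) = m \<and> Bh_set G h q b"
    using Bh_set_powers[OF assms, of q] comm_group_nat_mod_group[of "(h + 1) ^ q"] by auto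
  from LeastI_ex[OF this] show ?thesis using that unfolding phi_def by blast
qed

section \<open>Bounds on \<open>M\<close>\<close>

lemma finite_code_sizes:
  assumes "q \<ge> 1"
  shows "finite {card C | C. C \<subseteq> simplex q n \<and> (\<forall>x\<in>C. \<forall>y\<in>C. x \<noteq> y \<longrightarrow> d1 q x y > real h)}"
proof (rule finite_subset)
  show "{card C | C. C \<subseteq> simplex q n \<and> (\<forall>x\<in>C. \<forall>y\<in>C. x \<noteq> y \<longrightarrow> d1 q x y > real h)}
          \<subseteq> {..card (simplex q n)}"
  proof
    fix k assume "k \<in> {card C | C. C \<subseteq> simplex q n \<and> (\<forall>x\<in>C. \<forall>y\<in>C. x \<noteq> y \<longrightarrow> d1 q x y > real h)}"
    then obtain C where "k = card C" "C \<subseteq> simplex q n" by blast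
    then show "k \<in> {..card (simplex q n)}" using card_mono[OF finite_simplex[OF assms]] by simp
  qed
qed simp

lemma M_attained:
  assumes "q \<ge> 1"
  obtains C where "C \<subseteq> simplex q n" "\<forall>x\<in>C. \<forall>y\<in>C. x \<noteq> y \<longrightarrow> d1 q x y > real h"
    "card C = M q n h"
proof -
  let ?S = "{card C | C. C \<subseteq> simplex q n \<and> (\<forall>x\<in>C. \<forall>y\<in>C. x \<noteq> y \<longrightarrow> d1 q x y > real h)}"
  have "card {} \<in> ?S" by (intro CollectI exI[of _ "{}"]) simp
  then have "Max ?S \<in> ?S" using finite_code_sizes[OF assms] by (intro Max_in) auto
  then obtain C where "C \<subseteq> simplex q n" "\<forall>x\<in>C. \<forall>y\<in>C. x \<noteq> y \<longrightarrow> d1 q x y > real h"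
    "card C = Max ?S"
    by auto
  then show ?thesis using that unfolding M_def by simp
qed

lemma card_le_M:
  assumes "q \<ge> 1" "C \<subseteq> simplex q n" "\<forall>x\<in>C. \<forall>y\<in>C. x \<noteq> y \<longrightarrow> d1 q x y > real h"
  shows "card C \<le> M q n h"
proof -
  have "card C \<in> {card C | C. C \<subseteq> simplex q n \<and> (\<forall>x\<in>C. \<forall>y\<in>C. x \<noteq> y \<longrightarrow> d1 q x y > real h)}"
    using assms(2,3) by (intro CollectI exI[of _ C]) simp
  then show ?thesis unfolding M_def by (rule Max_ge[OF finite_code_sizes[OF assms(1)]])
qed

lemma beta_pos: "beta h q > 0"
proof -
  have "0 < ((q - 1) choose 0) * (((h + 1) div 2) choose 0) * ((h div 2 + (q - 1 - 0)) choose (q - 1 - 0))"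
    by simp
  also have "\<dots> \<le> beta h q" unfolding beta_def by (rule member_le_sum) auto
  finally show ?thesis .
qed

lemma M_lower_bound:
  assumes "q \<ge> 1" "h \<ge> 1"
  shows "real ((n + q - 1) choose (q - 1)) / real (phi h q) \<le> real (M q n h)"
proof -
  obtain G :: "nat monoid" and b where G: "comm_group G" "finite (carrier G)"
    "card (carrier G) = phi h q" "Bh_set G h q b"
    using phi_attained[OF assms(2)] by blast
  obtain C where C: "C \<subseteq> simplex q n" "\<forall>x\<in>C. \<forall>y\<in>C. x \<noteq> y \<longrightarrow> d1 q x y > real h"
    and big: "card (simplex q n) \<le> card C * phi h q"
    using comm_group.exists_code_of_Bh_set[OF G(1,4) assms(1) G(2), of n] unfolding G(3) by blast
  have "(n + q - 1) choose (q - 1) \<le> card C * phi h q"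
    using big card_simplex[OF assms(1)] by simp
  also have "\<dots> \<le> M q n h * phi h q" using card_le_M[OF assms(1) C] by (rule mult_le_mono1)
  finally have "(n + q - 1) choose (q - 1) \<le> M q n h * phi h q" .
  moreover have "phi h q > 0"
  proof -
    have "carrier G \<noteq> {}"
      using monoid.one_closed[OF group.is_monoid[OF comm_group.axioms(2)[OF G(1)]]] by blast
    then show ?thesis using G(2) unfolding G(3)[symmetric] by (simp add: card_gt_0_iff)
  qed
  ultimately show ?thesis by (simp add: divide_le_eq flip: of_nat_mult)
qed

lemma M_upper_bound:
  assumes "q \<ge> 2"
  shows "real (M q n h) \<le> real ((n + q - 1) choose (q - 1)) / real (beta h q)
           + (\<Sum>j = 1..q * ((h + 1) div 2). real (ibinom (int n + int q - 1 - int j) (q - 2)))"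
proof -
  have q: "q \<ge> 1" using assms by simp
  let ?N = "(n + q - 1) choose (q - 1)"
  let ?r = "(h + 1) div 2" and ?s = "h div 2"
  let ?I = "simplex_interior q n ?r"
  obtain C where C: "C \<subseteq> simplex q n" and far: "\<forall>x\<in>C. \<forall>y\<in>C. x \<noteq> y \<longrightarrow> d1 q x y > real h"
    and MC: "card C = M q n h"
    using M_attained[OF q] by blast
  have "?r + ?s = h" by presburger
  then have "card (C \<inter> ?I) * card (perturbations {1..<q} ?r ?s) \<le> (n + ?s - ?r + q - 1) choose (q - 1)"
    using far by (intro card_code_in_interior[OF q]) auto
  then have "card (C \<inter> ?I) * beta h q \<le> (n + ?s - ?r + q - 1) choose (q - 1)"
    by (simp only: card_perturbations_eq_beta[OF q])
  also have "\<dots> \<le> ?N" by (intro binomial_right_mono) simp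
  finally have inner: "real (card (C \<inter> ?I)) \<le> real ?N / real (beta h q)"
    using beta_pos[of h q] by (simp add: le_divide_eq flip: of_nat_mult)
  have "card (C - ?I) \<le> card (simplex q n - ?I)"
    using C finite_simplex[OF q] by (intro card_mono) auto
  then have boundary: "real (card (C - ?I))
      \<le> (\<Sum>j = 1..q * ?r. real (ibinom (int n + int q - 1 - int j) (q - 2)))"
    using card_simplex_boundary[OF assms, of n ?r] by linarith
  have "finite C" using C finite_simplex[OF q] by (rule finite_subset)
  then have "M q n h = card (C \<inter> ?I) + card (C - ?I)" unfolding MC[symmetric] by (rule card_Int_Diff)
  then show ?thesis using inner boundary by simp
qed

theorem mainTheorem15:
  fixes q n h :: nat
  assumes "q \<ge> 2" and "h \<ge> 1" and "n > h"
  shows "real (M q n h) \<ge> real ((n + q - 1) choose (q - 1)) / real (phi h q) \<and>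
         real (M q n h) \<le> real ((n + q - 1) choose (q - 1)) / real (beta h q)
           + (\<Sum>j = 1..q * ((h + 1) div 2). real (ibinom (int n + int q - 1 - int j) (q - 2)))"
  using assms by (intro conjI M_lower_bound M_upper_bound) simp_all

end
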